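(* Let $\mathcal S$ carry a $\sigma$-finite measure $\lambda$ and let $\{P_\xi:\xi\in\Xi\}$, $\Xi\subseteq\mathbb R^d$, be transition kernels with true parameter $\xi^*$. Assume: (i) there is $M<\infty$ with $P_\xi(ds'\mid s,a)=p_\xi(s'\mid s,a)\lambda(ds')$, $0\le p_\xi\le M$, and $\xi\mapsto p_\xi(s'\mid s,a)$ continuous; (ii) there is $c>0$ with $q_\phi(s'\mid s,a)\ge c$ for every transition $(s,a,s')$ in the dataset and every $\phi\in\Phi$; (iii) if $q_\phi(\cdot\mid s,a)=p_{\xi^*}(\cdot\mid s,a)$ for all $(s,a)\in\mathcal S\times\mathcal A$ then $\phi=(\xi^*,0)$. Then the population log-likelihood $L(\phi)=\mathbb E_{(s,a,s')\sim P_{\xi^*}}[\log q_\phi(s'\mid s,a)]$ has the unique maximizer $\phi^*=(\mu^*,\Sigma^* )=(\xi^*,0)$ over $\Phi$.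
   Context: $\Phi$ is a set of pairs $\phi=(\mu,\Sigma)$ with $\mu\in\mathbb R^d$ and $\Sigma$ positive semidefinite; $P_\phi=\mathcal N(\mu,\Sigma)$ (degenerate allowed), and $q_\phi(s'\mid s,a)=\int p_\xi(s'\mid s,a)\,P_\phi(d\xi)$. $(s,a,s')\sim P_{\xi^*}$ means $(s,a)$ is drawn from a fixed behavior distribution and $s'\sim P_{\xi^*}(\cdot\mid s,a)$. *)

theory Defs
  imports "HOL-Probability.Probability"
begin

definition psd :: "real^'n^'n \<Rightarrow> bool" where
  "psd S \<longleftrightarrow> transpose S = S \<and> (\<forall>x. 0 \<le> x \<bullet> (S *v x))"

definition std_gauss :: "(real^'n) measure" where
  "std_gauss = density lborel
     (\<lambda>x. ennreal ((2 * pi) powr (- real CARD('n) / 2) * exp (- (norm x)\<^sup>2 / 2)))"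

text \<open>Gaussian N(mu, S), possibly degenerate: law of mu + L z with z standard Gaussian
  and L L^T = S (the law does not depend on the choice of L).\<close>
definition gauss :: "real^'n \<Rightarrow> real^'n^'n \<Rightarrow> (real^'n) measure" where
  "gauss mu S = distr std_gauss borel (\<lambda>z. mu + (SOME L :: real^'n^'n. L ** transpose L = S) *v z)"

definition kernel_meas ::
  "'s measure \<Rightarrow> (real^'d \<Rightarrow> 's \<Rightarrow> 'a \<Rightarrow> 's \<Rightarrow> real) \<Rightarrow> real^'d \<Rightarrow> 's \<Rightarrow> 'a \<Rightarrow> 's measure" where
  "kernel_meas lam p xi s a = density lam (\<lambda>s'. ennreal (p xi s a s'))"

definition mix_density ::
  "(real^'d \<Rightarrow> 's \<Rightarrow> 'a \<Rightarrow> 's \<Rightarrow> real) \<Rightarrow> (real^'d) \<times> (real^'d^'d) \<Rightarrow> 's \<Rightarrow> 'a \<Rightarrow> 's \<Rightarrow> real" where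
  "mix_density p phi s a s' = (\<integral>xi. p xi s a s' \<partial>gauss (fst phi) (snd phi))"

definition pop_loglik ::
  "('s \<times> 'a) measure \<Rightarrow> 's measure \<Rightarrow> (real^'d \<Rightarrow> 's \<Rightarrow> 'a \<Rightarrow> 's \<Rightarrow> real) \<Rightarrow> real^'d
     \<Rightarrow> (real^'d) \<times> (real^'d^'d) \<Rightarrow> real" where
  "pop_loglik D lam p xis phi =
     (\<integral>sa. (\<integral>s'. ln (mix_density p phi (fst sa) (snd sa) s')
               \<partial>kernel_meas lam p xis (fst sa) (snd sa)) \<partial>D)"

end

theory Submission
  imports Defs
begin

(*
  Write xi0 for the true parameter and p0 = p_xi0(. | s, a).  For fixed (s, a) the inner
  integral of L(phi) is the cross entropy E_p0[ln q_phi] of the mixture density q_phi against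
  p0, and by Gibbs' inequality E_p0[ln p0] - E_p0[ln q_phi] = KL(p0 || q_phi) >= 0.  Since
  N(xi0, 0) is the point mass at xi0, the mixture at phi0 = (xi0, 0) is p0 itself, so phi0
  maximises L.  If L(phi) = L(phi0), the nonnegative integrand KL(p0 || q_phi) vanishes for
  almost every (s, a), so q_phi = p0 almost everywhere and identifiability forces phi = phi0.
  The bounds c <= q_phi and p <= M make all logarithms integrable.
*)

lemma std_gauss_density_eq_prod:
  fixes x :: "real^'n"
  shows "(2 * pi) powr (- real CARD('n) / 2) * exp (- (norm x)\<^sup>2 / 2)
       = (\<Prod>b\<in>Basis. std_normal_density (x \<bullet> b))"
proof -
  have "(\<Prod>b\<in>Basis. std_normal_density (x \<bullet> b))
      = (1 / sqrt (2 * pi)) ^ card (Basis :: (real^'n) set) * exp (\<Sum>b\<in>Basis. - (x \<bullet> b)\<^sup>2 / 2)"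
    by (simp only: std_normal_density_def prod.distrib prod_constant exp_sum[OF finite_Basis])
  also have "(1 / sqrt (2 * pi)) ^ card (Basis :: (real^'n) set) = (2 * pi) powr (- real CARD('n) / 2)"
  proof -
    have "sqrt (2 * pi) ^ CARD('n) = (2 * pi) powr (real CARD('n) / 2)"
      by (simp add: powr_half_sqrt[symmetric] powr_realpow[symmetric] powr_powr)
    then show ?thesis
      by (simp add: power_one_over powr_minus_divide)
  qed
  also have "(\<Sum>b\<in>Basis. - (x \<bullet> b)\<^sup>2 / 2) = - (norm x)\<^sup>2 / 2"
  proof -
    have "(norm x)\<^sup>2 = (\<Sum>b\<in>Basis. (x \<bullet> b)\<^sup>2)"
      unfolding power2_norm_eq_inner euclidean_inner[of x x] by (simp add: power2_eq_square)
    then show ?thesis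
      by (simp add: sum_negf sum_divide_distrib[symmetric])
  qed
  finally show ?thesis by simp
qed

lemma prob_space_std_gauss: "prob_space (std_gauss :: (real^'n) measure)"
proof
  have "emeasure (std_gauss :: (real^'n) measure) (space std_gauss)
      = (\<integral>\<^sup>+x. ennreal ((2 * pi) powr (- real CARD('n) / 2) * exp (- (norm (x :: real^'n))\<^sup>2 / 2)) \<partial>lborel)"
    by (simp add: std_gauss_def emeasure_density)
  also have "\<dots> = (\<integral>\<^sup>+x. (\<Prod>b\<in>Basis. ennreal (std_normal_density ((x :: real^'n) \<bullet> b))) \<partial>lborel)"
    unfolding std_gauss_density_eq_prod by (simp add: prod_ennreal)
  also have "\<dots> = (\<Prod>b\<in>(Basis :: (real^'n) set). (\<integral>\<^sup>+t. ennreal (std_normal_density t) \<partial>lborel))"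
    by (rule nn_integral_lborel_prod) auto
  also have "\<dots> = 1"
    by (simp add: nn_integral_eq_integral)
  finally show "emeasure (std_gauss :: (real^'n) measure) (space std_gauss) = 1" .
qed

lemma sets_gauss[measurable_cong]: "sets (gauss mu S) = sets borel"
  by (simp add: gauss_def)

lemma prob_space_gauss: "prob_space (gauss (mu :: real^'n) S)"
proof -
  have "(\<lambda>z. mu + L *v z) \<in> borel_measurable borel" for L :: "real^'n^'n"
    by (intro borel_measurable_continuous_onI continuous_intros linear_continuous_on
        matrix_vector_mul_bounded_linear)
  then show ?thesis
    unfolding gauss_def
    by (intro prob_space.prob_space_distr prob_space_std_gauss) (simp add: std_gauss_def)
qed

lemma matrix_mul_transpose_self_eq_0D:
  fixes L :: "'a::linordered_idom^'n^'n"
  assumes "L ** transpose L = 0"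
  shows "L = 0"
proof -
  have "(\<Sum>k\<in>UNIV. L $ i $ k * L $ i $ k) = 0" for i
    using arg_cong[OF assms, of "\<lambda>A. A $ i $ i"]
    by (simp add: matrix_matrix_mult_def transpose_def)
  then have "L $ i $ k = 0" for i k
    using sum_nonneg_eq_0_iff[of UNIV "\<lambda>k. L $ i $ k * L $ i $ k"] by simp
  then show ?thesis
    by (simp add: vec_eq_iff)
qed

lemma gauss_zero_eq_return: "gauss mu 0 = return borel (mu :: real^'n)"
proof -
  define L where "L = (SOME L :: real^'n^'n. L ** transpose L = 0)"
  have "L ** transpose L = 0"
    unfolding L_def by (rule someI[where x = 0]) (simp add: transpose_mat[of 0, simplified])
  then have "L = 0"
    by (rule matrix_mul_transpose_self_eq_0D)
  then show ?thesis
    unfolding gauss_def L_def[symmetric]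
    using prob_space.distr_const[OF prob_space_std_gauss, of mu borel] by simp
qed

lemma AE_eq_0_of_AE_density_pos:
  fixes f g :: "'a \<Rightarrow> real"
  assumes "f \<in> borel_measurable M" and "\<And>x. 0 \<le> f x" and "AE x in density M f. 0 < g x"
  shows "AE x in M. g x = 0 \<longrightarrow> f x = 0"
proof -
  have "AE x in M. 0 < f x \<longrightarrow> 0 < g x"
    using assms(1,3) by (simp add: AE_density)
  then show ?thesis
    by eventually_elim (use assms(2) in \<open>force simp: less_le\<close>)
qed

context sigma_finite_measure
begin

lemma
  fixes f g :: "'a \<Rightarrow> real"
  assumes f[measurable]: "f \<in> borel_measurable M" and f_nonneg: "\<And>x. 0 \<le> f x"
    and g[measurable]: "g \<in> borel_measurable M" and g_nonneg: "\<And>x. 0 \<le> g x"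
    and g_pos: "AE x in density M f. 0 < g x"
  shows KL_density_density_eq_integral_ln:
      "KL_divergence (exp 1) (density M g) (density M f) = (\<integral>x. ln (f x) - ln (g x) \<partial>density M f)"
    and integrable_mult_ln_ratio_iff:
      "integrable M (\<lambda>x. f x * ln (f x / g x)) \<longleftrightarrow> integrable (density M f) (\<lambda>x. ln (f x) - ln (g x))"
proof -
  have ac: "AE x in M. g x = 0 \<longrightarrow> f x = 0"
    using f f_nonneg g_pos by (rule AE_eq_0_of_AE_density_pos)
  have eq: "AE x in M. f x * ln (f x / g x) = f x * (ln (f x) - ln (g x))"
    using ac
  proof eventually_elim
    case (elim x)
    show ?case
      using elim f_nonneg[of x] g_nonneg[of x] by (cases "f x = 0") (auto simp: ln_div)
  qed
  have "KL_divergence (exp 1) (density M g) (density M f) = (\<integral>x. f x * ln (f x / g x) \<partial>M)"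
    using ac f_nonneg g_nonneg by (subst KL_density_density) (auto simp: log_ln[symmetric])
  also have "\<dots> = (\<integral>x. f x * (ln (f x) - ln (g x)) \<partial>M)"
    by (rule integral_cong_AE) (use eq in auto)
  also have "\<dots> = (\<integral>x. ln (f x) - ln (g x) \<partial>density M f)"
    using f_nonneg by (subst integral_real_density) auto
  finally show "KL_divergence (exp 1) (density M g) (density M f) = (\<integral>x. ln (f x) - ln (g x) \<partial>density M f)" .
  show "integrable M (\<lambda>x. f x * ln (f x / g x)) \<longleftrightarrow> integrable (density M f) (\<lambda>x. ln (f x) - ln (g x))"
    using f_nonneg by (subst integrable_real_density) (auto intro!: integrable_cong_AE[OF _ _ eq])
qed

lemma KL_density_density_eq_0_imp_AE_eq:
  fixes f g :: "'a \<Rightarrow> real"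
  assumes f[measurable]: "f \<in> borel_measurable M" and f_nonneg: "\<And>x. 0 \<le> f x"
    and g[measurable]: "g \<in> borel_measurable M" and g_nonneg: "\<And>x. 0 \<le> g x"
    and f_prob: "prob_space (density M f)" and g_prob: "prob_space (density M g)"
    and g_pos: "AE x in density M f. 0 < g x"
    and int_diff: "integrable (density M f) (\<lambda>x. ln (f x) - ln (g x))"
    and KL0: "KL_divergence (exp 1) (density M g) (density M f) = 0"
  shows "AE x in M. g x = f x"
proof -
  interpret G: information_space "density M g" "exp 1"
    using g_prob by (simp add: information_space_def information_space_axioms_def)
  have ratio: "density (density M g) (\<lambda>x. f x / g x) = density M f"
    using g_nonneg f_nonneg AE_eq_0_of_AE_density_pos[OF f f_nonneg g_pos]
    by (intro density_density_divide) auto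
  have "AE x in density M f. ln (f x / g x) = ln (f x) - ln (g x)"
  proof -
    have "AE x in density M f. 0 < f x"
      by (simp add: AE_density)
    with g_pos show ?thesis
      by eventually_elim (simp add: ln_div)
  qed
  then have "integrable (density M f) (\<lambda>x. ln (f x / g x))"
    using int_diff by (subst integrable_cong_AE) auto
  then have "integrable (density M g) (\<lambda>x. f x / g x * log (exp 1) (f x / g x))"
    unfolding ratio[symmetric] using f_nonneg g_nonneg
    by (subst (asm) integrable_real_density) (auto simp: log_ln[symmetric])
  then have "density (density M g) (\<lambda>x. f x / g x) = density M g"
    using KL0 f_nonneg g_nonneg f_prob
    by (subst G.KL_eq_0_iff_eq[symmetric]) (auto simp: ratio)
  then have "AE x in M. ennreal (f x) = ennreal (g x)"
    unfolding ratio by (intro density_unique) auto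
  then show ?thesis
    by eventually_elim (use f_nonneg g_nonneg in simp)
qed

lemma
  fixes f g :: "'a \<Rightarrow> real"
  assumes f[measurable]: "f \<in> borel_measurable M" and f_nonneg: "\<And>x. 0 \<le> f x"
    and g[measurable]: "g \<in> borel_measurable M" and g_nonneg: "\<And>x. 0 \<le> g x"
    and f_prob: "prob_space (density M f)" and g_prob: "prob_space (density M g)"
    and g_pos: "AE x in density M f. 0 < g x"
    and int_ln_f: "integrable (density M f) (\<lambda>x. ln (f x))"
    and int_ln_g: "integrable (density M f) (\<lambda>x. ln (g x))"
  shows gibbs_inequality: "(\<integral>x. ln (g x) \<partial>density M f) \<le> (\<integral>x. ln (f x) \<partial>density M f)"
    and gibbs_inequality_eq_imp_AE_eq:
      "(\<integral>x. ln (g x) \<partial>density M f) = (\<integral>x. ln (f x) \<partial>density M f) \<Longrightarrow> AE x in M. g x = f x"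
proof -
  have int_diff: "integrable (density M f) (\<lambda>x. ln (f x) - ln (g x))"
    using int_ln_f int_ln_g by simp
  have KL: "KL_divergence (exp 1) (density M g) (density M f)
      = (\<integral>x. ln (f x) \<partial>density M f) - (\<integral>x. ln (g x) \<partial>density M f)"
    using KL_density_density_eq_integral_ln[OF f f_nonneg g g_nonneg g_pos] int_ln_f int_ln_g by simp
  have "0 \<le> KL_divergence (exp 1) (density M g) (density M f)"
    using f_nonneg g_nonneg f_prob g_prob AE_eq_0_of_AE_density_pos[OF f f_nonneg g_pos]
      integrable_mult_ln_ratio_iff[OF f f_nonneg g g_nonneg g_pos] int_diff
    by (intro KL_density_density_nonneg) (auto simp: log_ln[symmetric])
  then show "(\<integral>x. ln (g x) \<partial>density M f) \<le> (\<integral>x. ln (f x) \<partial>density M f)"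
    unfolding KL by simp
  assume "(\<integral>x. ln (g x) \<partial>density M f) = (\<integral>x. ln (f x) \<partial>density M f)"
  then show "AE x in M. g x = f x"
    using KL_density_density_eq_0_imp_AE_eq[OF f f_nonneg g g_nonneg f_prob g_prob g_pos int_diff]
    unfolding KL by simp
qed

end

lemma (in prob_space)
  fixes f :: "'a \<Rightarrow> real"
  assumes f[measurable]: "f \<in> borel_measurable M"
    and lower: "AE x in M. c \<le> f x" and upper: "AE x in M. f x \<le> B" and c_pos: "0 < c"
  shows integrable_ln_bounded: "integrable M (\<lambda>x. ln (f x))"
    and abs_integral_ln_bounded: "\<bar>\<integral>x. ln (f x) \<partial>M\<bar> \<le> \<bar>ln c\<bar> + \<bar>ln B\<bar>"
proof -
  have bounds: "AE x in M. ln c \<le> ln (f x) \<and> ln (f x) \<le> ln B"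
    using lower upper by eventually_elim (use c_pos in auto)
  show int: "integrable M (\<lambda>x. ln (f x))"
    by (rule integrable_const_bound[where B = "\<bar>ln c\<bar> + \<bar>ln B\<bar>"]) (use bounds in auto)
  have "ln c \<le> (\<integral>x. ln (f x) \<partial>M)"
    by (rule integral_ge_const[OF int]) (use bounds in auto)
  moreover have "(\<integral>x. ln (f x) \<partial>M) \<le> ln B"
    by (rule integral_le_const[OF int]) (use bounds in auto)
  ultimately show "\<bar>\<integral>x. ln (f x) \<partial>M\<bar> \<le> \<bar>ln c\<bar> + \<bar>ln B\<bar>"
    by linarith
qed

lemma measurable_fix_middle:
  assumes "(\<lambda>(x, b, s). f x b s) \<in> borel_measurable (G \<Otimes>\<^sub>M (D \<Otimes>\<^sub>M N))" and "b \<in> space D"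
  shows "(\<lambda>(x, s). f x b s) \<in> borel_measurable (G \<Otimes>\<^sub>M N)"
proof -
  have "(\<lambda>(x, s). (x, b, s)) \<in> measurable (G \<Otimes>\<^sub>M N) (G \<Otimes>\<^sub>M (D \<Otimes>\<^sub>M N))"
    using assms(2) by measurable
  from measurable_compose[OF this assms(1)] show ?thesis
    by (simp add: case_prod_beta')
qed

lemma measurable_mixture:
  fixes G :: "'p measure" and f :: "'p \<Rightarrow> 'b \<Rightarrow> 's \<Rightarrow> real"
  assumes "sigma_finite_measure G"
    and "(\<lambda>(x, b, s). f x b s) \<in> borel_measurable (G \<Otimes>\<^sub>M (D \<Otimes>\<^sub>M N))"
  shows "(\<lambda>(b, s). \<integral>x. f x b s \<partial>G) \<in> borel_measurable (D \<Otimes>\<^sub>M N)"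
proof -
  have "(\<lambda>(y, x). f x (fst y) (snd y)) \<in> borel_measurable ((D \<Otimes>\<^sub>M N) \<Otimes>\<^sub>M G)"
    using measurable_compose[OF measurable_pair_swap' assms(2)] by (simp add: case_prod_beta')
  from sigma_finite_measure.borel_measurable_lebesgue_integral[OF assms(1) this]
  show ?thesis
    by (simp add: case_prod_beta')
qed

lemma prob_space_density_mixture:
  fixes G :: "'p measure" and N :: "'s measure" and f :: "'p \<Rightarrow> 's \<Rightarrow> real"
  assumes G: "prob_space G" and N: "sigma_finite_measure N"
    and f_meas: "(\<lambda>(x, s). f x s) \<in> borel_measurable (G \<Otimes>\<^sub>M N)"
    and f_nonneg: "\<And>x s. 0 \<le> f x s" and f_int: "\<And>s. integrable G (\<lambda>x. f x s)"
    and f_prob: "\<And>x. x \<in> space G \<Longrightarrow> prob_space (density N (f x))"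
  shows "prob_space (density N (\<lambda>s. \<integral>x. f x s \<partial>G))"
proof
  interpret G: prob_space G by fact
  interpret GN: pair_sigma_finite G N
    by (intro pair_sigma_finite.intro G.sigma_finite_measure_axioms N)
  have mix_meas: "(\<lambda>s. \<integral>x. f x s \<partial>G) \<in> borel_measurable N"
    using G.borel_measurable_lebesgue_integral[of "\<lambda>s x. f x s" N]
      measurable_compose[OF measurable_pair_swap' f_meas]
    by (simp add: case_prod_beta')
  have "emeasure (density N (\<lambda>s. \<integral>x. f x s \<partial>G)) (space N)
      = (\<integral>\<^sup>+s. (\<integral>\<^sup>+x. f x s \<partial>G) \<partial>N)"
    using mix_meas f_int f_nonneg
    by (simp add: emeasure_density nn_integral_eq_integral)
  also have "\<dots> = (\<integral>\<^sup>+x. (\<integral>\<^sup>+s. f x s \<partial>N) \<partial>G)"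
    by (rule GN.Fubini'[where f = "\<lambda>x s. ennreal (f x s)"])
      (use f_meas in \<open>simp add: case_prod_beta'\<close>)
  also have "\<dots> = (\<integral>\<^sup>+x. 1 \<partial>G)"
  proof (rule nn_integral_cong)
    fix x assume x: "x \<in> space G"
    have "(\<lambda>s. f x s) \<in> borel_measurable N"
      using measurable_Pair2[OF f_meas x] by simp
    then show "(\<integral>\<^sup>+s. f x s \<partial>N) = 1"
      using prob_space.emeasure_space_1[OF f_prob[OF x]]
      by (simp add: emeasure_density cong: nn_integral_cong)
  qed
  finally show "emeasure (density N (\<lambda>s. \<integral>x. f x s \<partial>G))
      (space (density N (\<lambda>s. \<integral>x. f x s \<partial>G))) = 1"
    by (simp add: G.emeasure_space_1)
qed

lemma integrable_expected_ln:
  fixes D :: "'b measure" and N :: "'s measure" and f h :: "'b \<Rightarrow> 's \<Rightarrow> real"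
  assumes D: "prob_space D" and N: "sigma_finite_measure N"
    and f_meas: "(\<lambda>(b, s). f b s) \<in> borel_measurable (D \<Otimes>\<^sub>M N)"
    and f_nonneg: "\<And>b s. 0 \<le> f b s"
    and f_prob: "\<And>b. b \<in> space D \<Longrightarrow> prob_space (density N (f b))"
    and h_meas: "(\<lambda>(b, s). h b s) \<in> borel_measurable (D \<Otimes>\<^sub>M N)"
    and h_upper: "\<And>b s. h b s \<le> B" and c_pos: "0 < c"
    and h_lower: "AE b in D. AE s in density N (f b). c \<le> h b s"
  shows "integrable D (\<lambda>b. \<integral>s. ln (h b s) \<partial>density N (f b))"
proof -
  interpret D: prob_space D by fact
  interpret N: sigma_finite_measure N by fact
  have fibre_meas: "f b \<in> borel_measurable N" "h b \<in> borel_measurable N" if "b \<in> space D" for b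
    using measurable_Pair2[OF f_meas that] measurable_Pair2[OF h_meas that] by simp_all
  have meas: "(\<lambda>b. \<integral>s. ln (h b s) \<partial>density N (f b)) \<in> borel_measurable D"
  proof -
    have "(\<lambda>b. \<integral>s. f b s * ln (h b s) \<partial>N) \<in> borel_measurable D"
      using f_meas h_meas by measurable
    moreover have "(\<integral>s. ln (h b s) \<partial>density N (f b)) = (\<integral>s. f b s * ln (h b s) \<partial>N)"
      if "b \<in> space D" for b
      using fibre_meas[OF that] f_nonneg by (subst integral_real_density) auto
    ultimately show ?thesis
      by (subst measurable_cong) auto
  qed
  have "AE b in D. norm (\<integral>s. ln (h b s) \<partial>density N (f b)) \<le> \<bar>ln c\<bar> + \<bar>ln B\<bar>"
    using h_lower AE_space
  proof eventually_elim
    case (elim b)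
    then show ?case
      using prob_space.abs_integral_ln_bounded[OF f_prob, of b "h b" c B] fibre_meas[of b]
        c_pos h_upper
      by simp
  qed
  then show ?thesis
    using meas by (rule D.integrable_const_bound)
qed

lemma
  fixes D :: "'b measure" and N :: "'s measure" and f g :: "'b \<Rightarrow> 's \<Rightarrow> real"
  assumes D: "prob_space D" and N: "sigma_finite_measure N"
    and f_meas: "(\<lambda>(b, s). f b s) \<in> borel_measurable (D \<Otimes>\<^sub>M N)"
    and f_nonneg: "\<And>b s. 0 \<le> f b s" and f_upper: "\<And>b s. f b s \<le> B"
    and f_prob: "\<And>b. b \<in> space D \<Longrightarrow> prob_space (density N (f b))"
    and g_meas: "(\<lambda>(b, s). g b s) \<in> borel_measurable (D \<Otimes>\<^sub>M N)"
    and g_nonneg: "\<And>b s. 0 \<le> g b s" and g_upper: "\<And>b s. g b s \<le> B"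
    and g_prob: "\<And>b. b \<in> space D \<Longrightarrow> prob_space (density N (g b))"
    and c_pos: "0 < c"
    and f_lower: "AE b in D. AE s in density N (f b). c \<le> f b s"
    and g_lower: "AE b in D. AE s in density N (f b). c \<le> g b s"
  shows expected_gibbs_inequality:
      "(\<integral>b. (\<integral>s. ln (g b s) \<partial>density N (f b)) \<partial>D) \<le> (\<integral>b. (\<integral>s. ln (f b s) \<partial>density N (f b)) \<partial>D)"
    and expected_gibbs_inequality_eq_imp_AE_eq:
      "(\<integral>b. (\<integral>s. ln (g b s) \<partial>density N (f b)) \<partial>D) = (\<integral>b. (\<integral>s. ln (f b s) \<partial>density N (f b)) \<partial>D)
      \<Longrightarrow> AE b in D. AE s in N. g b s = f b s"
proof -
  interpret N: sigma_finite_measure N by fact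
  define I where "I h b = (\<integral>s. ln (h b s) \<partial>density N (f b))" for h :: "'b \<Rightarrow> 's \<Rightarrow> real" and b
  have int_f: "integrable D (I f)"
    unfolding I_def
    by (rule integrable_expected_ln[OF D N f_meas f_nonneg f_prob f_meas f_upper c_pos f_lower])
  have int_g: "integrable D (I g)"
    unfolding I_def
    by (rule integrable_expected_ln[OF D N f_meas f_nonneg f_prob g_meas g_upper c_pos g_lower])
  have fibrewise: "AE b in D. I g b \<le> I f b \<and> (I g b = I f b \<longrightarrow> (AE s in N. g b s = f b s))"
    using f_lower g_lower AE_space
  proof eventually_elim
    case (elim b)
    have fibre_meas: "f b \<in> borel_measurable N" "g b \<in> borel_measurable N"
      using measurable_Pair2[OF f_meas elim(3)] measurable_Pair2[OF g_meas elim(3)] by simp_all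
    interpret F: prob_space "density N (f b)"
      using f_prob elim(3) .
    have g_pos: "AE s in density N (f b). 0 < g b s"
      using elim(2) by eventually_elim (use c_pos in linarith)
    have int_ln_f: "integrable (density N (f b)) (\<lambda>s. ln (f b s))"
      by (rule F.integrable_ln_bounded[where c = c and B = B]) (use elim fibre_meas f_upper c_pos in auto)
    have int_ln_g: "integrable (density N (f b)) (\<lambda>s. ln (g b s))"
      by (rule F.integrable_ln_bounded[where c = c and B = B]) (use elim fibre_meas g_upper c_pos in auto)
    note hyps = fibre_meas(1) f_nonneg fibre_meas(2) g_nonneg f_prob[OF elim(3)] g_prob[OF elim(3)]
      g_pos int_ln_f int_ln_g
    show ?case
      unfolding I_def
      using N.gibbs_inequality[OF hyps] N.gibbs_inequality_eq_imp_AE_eq[OF hyps] by simp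
  qed
  have "integral\<^sup>L D (I g) \<le> integral\<^sup>L D (I f)"
    using int_g int_f fibrewise by (intro integral_mono_AE) auto
  then show "(\<integral>b. (\<integral>s. ln (g b s) \<partial>density N (f b)) \<partial>D) \<le> (\<integral>b. (\<integral>s. ln (f b s) \<partial>density N (f b)) \<partial>D)"
    unfolding I_def .
  assume "(\<integral>b. (\<integral>s. ln (g b s) \<partial>density N (f b)) \<partial>D) = (\<integral>b. (\<integral>s. ln (f b s) \<partial>density N (f b)) \<partial>D)"
  then have "(\<integral>b. I f b - I g b \<partial>D) = 0"
    unfolding I_def[symmetric] using int_f int_g by simp
  then have "AE b in D. I f b - I g b = 0"
    using int_f int_g fibrewise by (subst (asm) integral_nonneg_eq_0_iff_AE) auto
  with fibrewise show "AE b in D. AE s in N. g b s = f b s"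
    by eventually_elim auto
qed

lemma mix_density_zero_cov:
  assumes "(\<lambda>xi. p xi s a s') \<in> borel_measurable borel"
  shows "mix_density p (mu, 0) s a s' = p mu s a s'"
  using assms by (simp add: mix_density_def gauss_zero_eq_return integral_return)

lemma
  fixes lam :: "'s measure" and D :: "('s \<times> 'a) measure"
    and p :: "real^'d \<Rightarrow> 's \<Rightarrow> 'a \<Rightarrow> 's \<Rightarrow> real"
  assumes lam: "sigma_finite_measure lam"
    and p_meas: "(\<lambda>(xi, sa, s'). p xi (fst sa) (snd sa) s') \<in> borel_measurable (borel \<Otimes>\<^sub>M (D \<Otimes>\<^sub>M lam))"
    and p_kernel: "\<forall>xi s a. prob_space (kernel_meas lam p xi s a)"
    and p_bound: "\<forall>xi s a s'. 0 \<le> p xi s a s' \<and> p xi s a s' \<le> M"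
    and p_param_meas: "\<And>s a s'. (\<lambda>xi. p xi s a s') \<in> borel_measurable borel"
  shows measurable_mix_density:
      "(\<lambda>(sa, s'). mix_density p phi (fst sa) (snd sa) s') \<in> borel_measurable (D \<Otimes>\<^sub>M lam)"
    and mix_density_bounds: "0 \<le> mix_density p phi s a s' \<and> mix_density p phi s a s' \<le> M"
    and prob_space_density_mix_density:
      "sa \<in> space D \<Longrightarrow> prob_space (density lam (mix_density p phi (fst sa) (snd sa)))"
proof -
  interpret G: prob_space "gauss (fst phi) (snd phi)"
    by (rule prob_space_gauss)
  have p_meas_G: "(\<lambda>(xi, sa, s'). p xi (fst sa) (snd sa) s')
      \<in> borel_measurable (gauss (fst phi) (snd phi) \<Otimes>\<^sub>M (D \<Otimes>\<^sub>M lam))"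
    using p_meas
    by (simp only: measurable_cong_sets[OF sets_pair_measure_cong[OF sets_gauss refl] refl])
  show "(\<lambda>(sa, s'). mix_density p phi (fst sa) (snd sa) s') \<in> borel_measurable (D \<Otimes>\<^sub>M lam)"
    using measurable_mixture[OF G.sigma_finite_measure_axioms p_meas_G]
    by (simp add: mix_density_def)
  have p_int: "integrable (gauss (fst phi) (snd phi)) (\<lambda>xi. p xi s a s')" for s a s'
    using p_bound p_param_meas by (intro G.integrable_const_bound[where B = M]) auto
  show "0 \<le> mix_density p phi s a s' \<and> mix_density p phi s a s' \<le> M"
    unfolding mix_density_def
    using p_bound by (auto intro!: integral_nonneg G.integral_le_const p_int)
  assume "sa \<in> space D"
  show "prob_space (density lam (mix_density p phi (fst sa) (snd sa)))"
    unfolding mix_density_def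
    using p_bound p_kernel p_int
    by (intro prob_space_density_mixture[OF prob_space_gauss lam]
        measurable_fix_middle[OF p_meas_G \<open>sa \<in> space D\<close>]) (auto simp: kernel_meas_def)
qed

theorem lemma1:
  fixes lam :: "'s measure"
    and D :: "('s \<times> 'a) measure"
    and p :: "real^'d \<Rightarrow> 's \<Rightarrow> 'a \<Rightarrow> 's \<Rightarrow> real"
    and xis :: "real^'d"
    and Phi :: "((real^'d) \<times> (real^'d^'d)) set"
    and M c :: real
  assumes lam_sf: "sigma_finite_measure lam"
    and D_prob: "prob_space D"
    and Phi_psd: "\<forall>phi\<in>Phi. psd (snd phi)"
    and opt_in: "(xis, 0) \<in> Phi"
    and p_meas: "(\<lambda>(xi, sa, s'). p xi (fst sa) (snd sa) s') \<in> borel_measurable (borel \<Otimes>\<^sub>M (D \<Otimes>\<^sub>M lam))"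
    and p_kernel: "\<forall>xi s a. prob_space (kernel_meas lam p xi s a)"
    and p_bound: "\<forall>xi s a s'. 0 \<le> p xi s a s' \<and> p xi s a s' \<le> M"
    and p_cont: "\<forall>s a s'. continuous_on UNIV (\<lambda>xi. p xi s a s')"
    and c_pos: "c > 0"
    and q_lower: "\<forall>phi\<in>Phi. AE sa in D. AE s' in kernel_meas lam p xis (fst sa) (snd sa).
                     c \<le> mix_density p phi (fst sa) (snd sa) s'"
    and ident: "\<forall>phi\<in>Phi. (AE sa in D. AE s' in lam.
                     mix_density p phi (fst sa) (snd sa) s' = p xis (fst sa) (snd sa) s')
                   \<longrightarrow> phi = (xis, 0)"
  shows "(\<forall>phi\<in>Phi. pop_loglik D lam p xis phi \<le> pop_loglik D lam p xis (xis, 0))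
       \<and> (\<forall>phi\<in>Phi. pop_loglik D lam p xis phi = pop_loglik D lam p xis (xis, 0) \<longrightarrow> phi = (xis, 0))"
proof -
  have p_param_meas: "(\<lambda>xi. p xi s a s') \<in> borel_measurable borel" for s a s'
    using p_cont by (intro borel_measurable_continuous_onI) auto
  define q where "q phi sa = mix_density p phi (fst sa) (snd sa)" for phi sa
  note mix_hyps = lam_sf p_meas p_kernel p_bound p_param_meas
  have q_meas: "(\<lambda>(sa, s'). q phi sa s') \<in> borel_measurable (D \<Otimes>\<^sub>M lam)"
    and q_nonneg: "0 \<le> q phi sa s'" and q_le: "q phi sa s' \<le> M"
    and q_prob: "sa \<in> space D \<Longrightarrow> prob_space (density lam (q phi sa))" for phi sa s'
    using measurable_mix_density[OF mix_hyps] mix_density_bounds[OF mix_hyps]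
      prob_space_density_mix_density[OF mix_hyps] by (simp_all add: q_def)
  have q_opt: "q (xis, 0) sa s' = p xis (fst sa) (snd sa) s'" for sa s'
    by (simp add: q_def mix_density_zero_cov p_param_meas)
  have kernel: "kernel_meas lam p xis (fst sa) (snd sa) = density lam (q (xis, 0) sa)" for sa
    by (simp add: kernel_meas_def q_opt)
  have loglik: "pop_loglik D lam p xis phi
      = (\<integral>sa. (\<integral>s'. ln (q phi sa s') \<partial>density lam (q (xis, 0) sa)) \<partial>D)" for phi
    by (simp add: pop_loglik_def kernel q_def)
  have lower: "AE sa in D. AE s' in density lam (q (xis, 0) sa). c \<le> q phi sa s'"
    if "phi \<in> Phi" for phi
    using bspec[OF q_lower that] unfolding kernel q_def .
  have "pop_loglik D lam p xis phi \<le> pop_loglik D lam p xis (xis, 0)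
      \<and> (pop_loglik D lam p xis phi = pop_loglik D lam p xis (xis, 0) \<longrightarrow> phi = (xis, 0))"
    if phi: "phi \<in> Phi" for phi
  proof (intro conjI impI)
    note hyps = D_prob lam_sf q_meas q_nonneg q_le q_prob q_meas q_nonneg q_le q_prob c_pos
      lower[OF opt_in] lower[OF phi]
    show "pop_loglik D lam p xis phi \<le> pop_loglik D lam p xis (xis, 0)"
      unfolding loglik by (rule expected_gibbs_inequality[OF hyps])
    assume "pop_loglik D lam p xis phi = pop_loglik D lam p xis (xis, 0)"
    then have "AE sa in D. AE s' in lam. q phi sa s' = q (xis, 0) sa s'"
      unfolding loglik by (intro expected_gibbs_inequality_eq_imp_AE_eq[OF hyps])
    with ident phi show "phi = (xis, 0)"
      by (simp add: q_opt) (simp add: q_def)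
  qed
  then show ?thesis
    by blast
qed

end
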